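(* Let $K,L\ (\le K),F,Z,S,g$ be positive integers and let $\mathbf{A}$ be a $g$-regular $(K,L,F,Z,S)$ EPDA. Then the multi-antenna coded caching scheme obtained from $\mathbf{A}$ (with delivery time $T=\frac{S}{F}$) satisfies $$T=\frac{K}{g}\left(1-\frac{Z}{F}\right),$$ and moreover $$g\le L+\frac{KZ}{F}.$$ In particular, if $\frac{Z}{F}=\frac{t}{K}$ for an integer $t$, then $g\le t+L$.
   Context: Notation: $[n]=\{1,\dots,n\}$. An $F\times K$ array $\mathbf{A}=[a_{j,k}]$ with entries either a symbol $\star$ or integers in $[S]$ is a $(K,L,F,Z,S)$ EPDA if: (C1) $\star$ appears exactly $Z$ times in each column; (C2) every integer in $[S]$ occurs at least once; (C3) no integer appears more than once in any column; (C4) for each $s\in[S]$, letting $\mathbf{A}^{(s)}$ be the subarray obtained by deleting all rows and columns of $\mathbf{A}$ not containing $s$, no row of $\mathbf{A}^{(s)}$ contains more than $L$ integer entries. The EPDA is $g$-regular if, in addition, each integer in $[S]$ appears exactly $g$ times in $\mathbf{A}$. The multi-antenna coded caching scheme obtained from an EPDA splits each file into $F$ subfiles, and makes one transmission of size $1/F$ file per integer $s\in[S]$, so its delivery time is $T=S/F$. *)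

theory Defs
  imports Main "HOL.Real"
begin

text \<open>An F x K array with rows indexed by j < F and columns by k < K.
  Entry None represents the star symbol, Some s an integer entry s.\<close>
type_synonym array = "nat \<Rightarrow> nat \<Rightarrow> nat option"

definition rows_with :: "array \<Rightarrow> nat \<Rightarrow> nat \<Rightarrow> nat \<Rightarrow> nat set" where
  "rows_with A F K s = {j. j < F \<and> (\<exists>k<K. A j k = Some s)}"

definition cols_with :: "array \<Rightarrow> nat \<Rightarrow> nat \<Rightarrow> nat \<Rightarrow> nat set" where
  "cols_with A F K s = {k. k < K \<and> (\<exists>j<F. A j k = Some s)}"

definition EPDA :: "nat \<Rightarrow> nat \<Rightarrow> nat \<Rightarrow> nat \<Rightarrow> nat \<Rightarrow> array \<Rightarrow> bool" where
  "EPDA K L F Z S A \<longleftrightarrow>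
     \<comment> \<open>entries are star or integers in [S]\<close>
     (\<forall>j<F. \<forall>k<K. \<forall>s. A j k = Some s \<longrightarrow> s \<in> {1..S}) \<and>
     \<comment> \<open>(C1)\<close>
     (\<forall>k<K. card {j. j < F \<and> A j k = None} = Z) \<and>
     \<comment> \<open>(C2)\<close>
     (\<forall>s\<in>{1..S}. \<exists>j<F. \<exists>k<K. A j k = Some s) \<and>
     \<comment> \<open>(C3)\<close>
     (\<forall>k<K. \<forall>j1<F. \<forall>j2<F. \<forall>s. A j1 k = Some s \<and> A j2 k = Some s \<longrightarrow> j1 = j2) \<and>
     \<comment> \<open>(C4)\<close>
     (\<forall>s\<in>{1..S}. \<forall>j\<in>rows_with A F K s.
        card {k \<in> cols_with A F K s. A j k \<noteq> None} \<le> L)"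

definition regular_EPDA :: "nat \<Rightarrow> nat \<Rightarrow> nat \<Rightarrow> nat \<Rightarrow> nat \<Rightarrow> nat \<Rightarrow> array \<Rightarrow> bool" where
  "regular_EPDA g K L F Z S A \<longleftrightarrow> EPDA K L F Z S A \<and>
     (\<forall>s\<in>{1..S}. card {(j, k). j < F \<and> k < K \<and> A j k = Some s} = g)"

definition delivery_time :: "nat \<Rightarrow> nat \<Rightarrow> real" where
  "delivery_time F S = real S / real F"

end

theory Submission
  imports Defs
begin

text \<open>Counting the integer entries of \<open>A\<close> column by column gives \<open>K (F - Z)\<close> by (C1), and
  symbol by symbol gives \<open>S g\<close> by regularity; this is the formula for \<open>T = S / F\<close>.
  For the bound on \<open>g\<close>, (C3) places the \<open>g\<close> occurrences of a symbol \<open>s\<close> in \<open>g\<close> distinct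
  columns. If row \<open>j\<close> contains \<open>s\<close>, then by (C4) at most \<open>L\<close> of these columns carry an
  integer in row \<open>j\<close>, so row \<open>j\<close> has at least \<open>g - L\<close> stars; a row without
  integers has \<open>K \<ge> g\<close> stars. Counting the stars by rows and
  by columns gives \<open>F (g - L) \<le> K Z\<close>.\<close>

lemma regular_EPDA_imp_EPDA:
  "regular_EPDA g K L F Z S A \<Longrightarrow> EPDA K L F Z S A"
  by (simp add: regular_EPDA_def)

lemma card_grid_by_rows:
  fixes F K :: nat
  shows "card {(j, k). j < F \<and> k < K \<and> P j k} = (\<Sum>j<F. card {k. k < K \<and> P j k})"
proof -
  have "{(j, k). j < F \<and> k < K \<and> P j k} = Sigma {..<F} (\<lambda>j. {k. k < K \<and> P j k})"
    by auto
  then show ?thesis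
    by simp
qed

lemma card_grid_by_cols:
  fixes F K :: nat
  shows "card {(j, k). j < F \<and> k < K \<and> P j k} = (\<Sum>k<K. card {j. j < F \<and> P j k})"
proof -
  have "{(j, k). j < F \<and> k < K \<and> P j k} = prod.swap ` Sigma {..<K} (\<lambda>k. {j. j < F \<and> P j k})"
    by force
  then show ?thesis
    by (simp add: card_image)
qed

lemma EPDA_Z_le_F:
  assumes "EPDA K L F Z S A" "K > 0"
  shows "Z \<le> F"
proof -
  have "card {j. j < F \<and> A j 0 = None} = Z"
    using assms unfolding EPDA_def by blast
  moreover have "card {j. j < F \<and> A j 0 = None} \<le> card {..<F}"
    by (rule card_mono) auto
  ultimately show ?thesis
    by simp
qed

lemma EPDA_card_integers_in_column:
  assumes "EPDA K L F Z S A" "k < K"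
  shows "card {j. j < F \<and> A j k \<noteq> None} = F - Z"
proof -
  have stars: "card {j. j < F \<and> A j k = None} = Z"
    using assms unfolding EPDA_def by blast
  have "{..<F} = {j. j < F \<and> A j k \<noteq> None} \<union> {j. j < F \<and> A j k = None}"
    by auto
  then have "F = card ({j. j < F \<and> A j k \<noteq> None} \<union> {j. j < F \<and> A j k = None})"
    by (metis card_lessThan)
  also have "\<dots> = card {j. j < F \<and> A j k \<noteq> None} + card {j. j < F \<and> A j k = None}"
    by (rule card_Un_disjoint) auto
  finally have "F = card {j. j < F \<and> A j k \<noteq> None} + card {j. j < F \<and> A j k = None}" .
  then show ?thesis
    using stars by simp
qed

lemma EPDA_card_integer_entries:
  assumes "EPDA K L F Z S A"
  shows "card {(j, k). j < F \<and> k < K \<and> A j k \<noteq> None} = K * (F - Z)"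
  using EPDA_card_integers_in_column[OF assms] by (simp add: card_grid_by_cols)

lemma EPDA_card_star_entries:
  assumes "EPDA K L F Z S A"
  shows "card {(j, k). j < F \<and> k < K \<and> A j k = None} = K * Z"
  using assms unfolding EPDA_def by (simp add: card_grid_by_cols)

lemma regular_EPDA_card_integer_entries:
  assumes "regular_EPDA g K L F Z S A"
  shows "card {(j, k). j < F \<and> k < K \<and> A j k \<noteq> None} = S * g"
proof -
  have range: "\<forall>j<F. \<forall>k<K. \<forall>s. A j k = Some s \<longrightarrow> s \<in> {1..S}"
    and regular: "\<forall>s\<in>{1..S}. card {(j, k). j < F \<and> k < K \<and> A j k = Some s} = g"
    using assms unfolding regular_EPDA_def EPDA_def by blast+
  have "{(j, k). j < F \<and> k < K \<and> A j k \<noteq> None}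
      = (\<Union>s\<in>{1..S}. {(j, k). j < F \<and> k < K \<and> A j k = Some s})"
    using range by auto
  also have "card \<dots> = (\<Sum>s\<in>{1..S}. card {(j, k). j < F \<and> k < K \<and> A j k = Some s})"
  proof (rule card_UN_disjoint)
    show "\<forall>s\<in>{1..S}. finite {(j, k). j < F \<and> k < K \<and> A j k = Some s}"
      by (auto intro: finite_subset[of _ "{..<F} \<times> {..<K}"])
  qed auto
  also have "\<dots> = S * g"
    using regular by simp
  finally show ?thesis .
qed

lemma regular_EPDA_S_g_eq:
  assumes "regular_EPDA g K L F Z S A"
  shows "S * g = K * (F - Z)"
  using regular_EPDA_card_integer_entries[OF assms]
    EPDA_card_integer_entries[OF regular_EPDA_imp_EPDA[OF assms]] by simp

lemma EPDA_card_occurrences_eq_card_cols_with: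
  assumes "EPDA K L F Z S A"
  shows "card {(j, k). j < F \<and> k < K \<and> A j k = Some s} = card (cols_with A F K s)"
proof -
  have "\<forall>k<K. \<forall>j1<F. \<forall>j2<F. A j1 k = Some s \<and> A j2 k = Some s \<longrightarrow> j1 = j2"
    using assms unfolding EPDA_def by blast
  then have "inj_on snd {(j, k). j < F \<and> k < K \<and> A j k = Some s}"
    by (auto simp: inj_on_def)
  moreover have "snd ` {(j, k). j < F \<and> k < K \<and> A j k = Some s} = cols_with A F K s"
    unfolding cols_with_def by force
  ultimately show ?thesis
    using card_image by fastforce
qed

lemma regular_EPDA_card_cols_with:
  assumes "regular_EPDA g K L F Z S A" "s \<in> {1..S}"
  shows "card (cols_with A F K s) = g"
  using assms EPDA_card_occurrences_eq_card_cols_with[OF regular_EPDA_imp_EPDA[OF assms(1)]]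
  unfolding regular_EPDA_def by simp

lemma regular_EPDA_g_le_K:
  assumes "regular_EPDA g K L F Z S A" "S > 0"
  shows "g \<le> K"
proof -
  have "g = card (cols_with A F K 1)"
    using assms regular_EPDA_card_cols_with by simp
  also have "\<dots> \<le> card {..<K}"
    by (rule card_mono) (auto simp: cols_with_def)
  finally show ?thesis
    by simp
qed

lemma regular_EPDA_row_stars:
  assumes "regular_EPDA g K L F Z S A" "S > 0" "j < F"
  shows "g \<le> L + card {k. k < K \<and> A j k = None}"
proof (cases "\<exists>k<K. A j k \<noteq> None")
  case False
  then have "{k. k < K \<and> A j k = None} = {..<K}"
    by auto
  then show ?thesis
    using regular_EPDA_g_le_K[OF assms(1,2)] by simp
next
  case True
  then obtain k s where "k < K" "A j k = Some s"
    by auto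
  then have s: "s \<in> {1..S}" and row: "j \<in> rows_with A F K s"
    using assms unfolding regular_EPDA_def EPDA_def rows_with_def by blast+
  define C where "C = cols_with A F K s"
  have "finite C"
    unfolding C_def cols_with_def by simp
  have "C = {k \<in> C. A j k \<noteq> None} \<union> {k \<in> C. A j k = None}"
    by auto
  then have "g = card ({k \<in> C. A j k \<noteq> None} \<union> {k \<in> C. A j k = None})"
    using regular_EPDA_card_cols_with[OF assms(1) s] unfolding C_def by simp
  also have "\<dots> = card {k \<in> C. A j k \<noteq> None} + card {k \<in> C. A j k = None}"
    by (rule card_Un_disjoint) (use \<open>finite C\<close> in auto)
  finally have "g = card {k \<in> C. A j k \<noteq> None} + card {k \<in> C. A j k = None}" .
  moreover have "card {k \<in> C. A j k \<noteq> None} \<le> L"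
    using assms s row unfolding regular_EPDA_def EPDA_def C_def by blast
  moreover have "card {k \<in> C. A j k = None} \<le> card {k. k < K \<and> A j k = None}"
    by (rule card_mono) (auto simp: C_def cols_with_def)
  ultimately show ?thesis
    by linarith
qed

lemma regular_EPDA_F_g_le:
  assumes "regular_EPDA g K L F Z S A" "S > 0"
  shows "F * g \<le> F * L + K * Z"
proof -
  have "F * g \<le> (\<Sum>j<F. L + card {k. k < K \<and> A j k = None})"
    using sum_mono[of "{..<F}" "\<lambda>_. g"] regular_EPDA_row_stars[OF assms] by simp
  also have "\<dots> = F * L + card {(j, k). j < F \<and> k < K \<and> A j k = None}"
    by (simp add: sum.distrib card_grid_by_rows)
  also have "\<dots> = F * L + K * Z"
    using EPDA_card_star_entries[OF regular_EPDA_imp_EPDA[OF assms(1)]] by simp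
  finally show ?thesis .
qed

theorem lemma3:
  fixes K L F Z S g :: nat and A :: array
  assumes "K > 0" "L > 0" "F > 0" "Z > 0" "S > 0" "g > 0" "L \<le> K"
    and "regular_EPDA g K L F Z S A"
  shows "delivery_time F S = real K / real g * (1 - real Z / real F) \<and>
         real g \<le> real L + real K * real Z / real F \<and>
         (\<forall>t::int. real Z / real F = real_of_int t / real K \<longrightarrow> int g \<le> t + int L)"
proof -
  have "Z \<le> F"
    using EPDA_Z_le_F[OF regular_EPDA_imp_EPDA[OF assms(8)] assms(1)] .
  then have "real S * real g = real K * (real F - real Z)"
    using arg_cong[OF regular_EPDA_S_g_eq[OF assms(8)], of real] by simp
  then have delivery: "delivery_time F S = real K / real g * (1 - real Z / real F)"
    using assms(3,6) unfolding delivery_time_def by (simp add: field_simps)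
  have "real F * real g \<le> real F * real L + real K * real Z"
    using regular_EPDA_F_g_le[OF assms(8,5)] by (simp flip: of_nat_mult of_nat_add)
  then have bound: "real g \<le> real L + real K * real Z / real F"
    using assms(3) by (simp add: field_simps)
  have "int g \<le> t + int L" if "real Z / real F = real_of_int t / real K" for t :: int
  proof -
    have "real K * real Z / real F = real_of_int t"
      using that assms(1,3) by (simp add: field_simps)
    then show ?thesis
      using bound by linarith
  qed
  then show ?thesis
    using delivery bound by blast
qed

end
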